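(* Let $G$ be a finite group of $F$-class $1$ and $F$-rank $\ell$, and let $H$ be the largest solvable normal subgroup of $G$. Then: (a) $F(G)$ is a direct product of elementary abelian groups and $|F(G)| = \ell$; (b) $H$ is solvable of $F$-class $1$ and $F$-rank $\ell$, and $F(G) = F(H)$; (c) $C_H(F(H)) = F(H)$.
   Context: For a finite group $G$, $F(G)$ denotes its Fitting subgroup. The $F$-central series of $G$ is defined by $\nu_0(G)=F(G)$ and, for $i\ge 0$, $\nu_{i+1}(G)$ is the smallest normal subgroup $N$ of $F(G)$ with $N\le \nu_i(G)$ such that $\nu_i(G)/N$ is centralized by $F(G)$ and is a direct product of elementary abelian groups. The $F$-class of $G$ is the least integer $c\ge 0$ with $\nu_c(G)=\{1\}$; if the $F$-class is at least $1$, the $F$-rank of $G$ is $|\nu_0(G)/\nu_1(G)|$. *)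

theory Defs
  imports "HOL-Algebra.Algebra"
begin

fun lower_central :: "('a, 'b) monoid_scheme \<Rightarrow> nat \<Rightarrow> 'a set" where
  "lower_central K 0 = carrier K"
| "lower_central K (Suc n) =
     generate K {x \<otimes>\<^bsub>K\<^esub> y \<otimes>\<^bsub>K\<^esub> inv\<^bsub>K\<^esub> x \<otimes>\<^bsub>K\<^esub> inv\<^bsub>K\<^esub> y
                  | x y. x \<in> lower_central K n \<and> y \<in> carrier K}"

definition nilpotent_group :: "('a, 'b) monoid_scheme \<Rightarrow> bool" where
  "nilpotent_group K \<longleftrightarrow> group K \<and> (\<exists>n. lower_central K n = {\<one>\<^bsub>K\<^esub>})"

definition Fitting :: "('a, 'b) monoid_scheme \<Rightarrow> 'a set" where
  "Fitting G = generate G (\<Union>{N. N \<lhd> G \<and> nilpotent_group (G\<lparr>carrier := N\<rparr>)})"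

definition elementary_abelian :: "('a, 'b) monoid_scheme \<Rightarrow> bool" where
  "elementary_abelian E \<longleftrightarrow> comm_group E \<and>
     (\<exists>p::nat. Factorial_Ring.prime p \<and> (\<forall>x \<in> carrier E. x [^]\<^bsub>E\<^esub> p = \<one>\<^bsub>E\<^esub>))"

text \<open>The factors are taken with the same element type as Q, which loses nothing
  (each factor is isomorphic to a subgroup of Q).\<close>
definition dprod_elem_abelian :: "('x, 'y) monoid_scheme \<Rightarrow> bool" where
  "dprod_elem_abelian Q \<longleftrightarrow>
     (\<exists>(I::nat set) (E :: nat \<Rightarrow> 'x monoid). finite I \<and>
        (\<forall>i\<in>I. elementary_abelian (E i)) \<and> Q \<cong> product_group I E)"

definition F_step :: "('a, 'b) monoid_scheme \<Rightarrow> 'a set \<Rightarrow> 'a set" where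
  "F_step G V = \<Inter>{N. N \<subseteq> V \<and> N \<lhd> (G\<lparr>carrier := Fitting G\<rparr>) \<and>
      (\<forall>f \<in> Fitting G. \<forall>x \<in> V. f \<otimes>\<^bsub>G\<^esub> x \<otimes>\<^bsub>G\<^esub> inv\<^bsub>G\<^esub> f \<otimes>\<^bsub>G\<^esub> inv\<^bsub>G\<^esub> x \<in> N) \<and>
      dprod_elem_abelian ((G\<lparr>carrier := V\<rparr>) Mod N)}"

fun F_central :: "('a, 'b) monoid_scheme \<Rightarrow> nat \<Rightarrow> 'a set" where
  "F_central G 0 = Fitting G"
| "F_central G (Suc i) = F_step G (F_central G i)"

definition has_F_class :: "('a, 'b) monoid_scheme \<Rightarrow> nat \<Rightarrow> bool" where
  "has_F_class G c \<longleftrightarrow> F_central G c = {\<one>\<^bsub>G\<^esub>} \<and> (\<forall>j<c. F_central G j \<noteq> {\<one>\<^bsub>G\<^esub>})"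

definition F_rank :: "('a, 'b) monoid_scheme \<Rightarrow> nat" where
  "F_rank G = order ((G\<lparr>carrier := F_central G 0\<rparr>) Mod (F_central G 1))"

end

theory Submission
  imports Defs "HOL-Number_Theory.Cong"
begin

text \<open>Since \<open>\<nu>\<^sub>1(G) = 1\<close>, the normal subgroups \<open>N\<close> of \<open>F(G)\<close> whose intersection defines
  \<open>\<nu>\<^sub>1(G)\<close> meet trivially. Each contains the commutators of \<open>F(G)\<close> and has \<open>F(G)/N\<close> a product
  of elementary abelian groups, so \<open>F(G)\<close> is abelian of squarefree exponent, hence itself such
  a product, and \<open>|F(G)| = |F(G)/\<nu>\<^sub>1(G)| = \<ell>\<close>. Being abelian, \<open>F(G)\<close> is solvable and lies in
  \<open>H\<close>; as \<open>F(H) = H \<inter> F(G)\<close> for normal \<open>H\<close>, \<open>F(H) = F(G)\<close> and the \<open>F\<close>-central series of \<open>H\<close>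
  starts as that of \<open>G\<close>. Finally \<open>C\<^sub>H(F(G)) \<subseteq> F(G)\<close> for solvable normal \<open>H\<close>: going down the
  derived series of \<open>C\<^sub>H(F(G))\<close>, a normal subgroup centralising \<open>F(G)\<close> with derived subgroup in
  \<open>F(G)\<close> is nilpotent, hence lies in \<open>F(G)\<close>.

  That \<open>F(G)\<close> is the largest nilpotent normal subgroup is Fitting's theorem, proved by
  expanding the lower central series of \<open>AB\<close> into commutators with \<open>i\<close> entries from \<open>A\<close> and
  \<open>j\<close> from \<open>B\<close>, which vanish once \<open>i\<close> or \<open>j\<close> exceeds the nilpotency class.\<close>

section \<open>Commutator subgroups and the lower central series\<close>

definition commutator_set :: "('a, 'b) monoid_scheme \<Rightarrow> 'a set \<Rightarrow> 'a set \<Rightarrow> 'a set" where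
  "commutator_set G A B = {a \<otimes>\<^bsub>G\<^esub> b \<otimes>\<^bsub>G\<^esub> inv\<^bsub>G\<^esub> a \<otimes>\<^bsub>G\<^esub> inv\<^bsub>G\<^esub> b | a b. a \<in> A \<and> b \<in> B}"

definition commutator :: "('a, 'b) monoid_scheme \<Rightarrow> 'a set \<Rightarrow> 'a set \<Rightarrow> 'a set" where
  "commutator G A B = generate G (commutator_set G A B)"

fun lower_central_in :: "('a, 'b) monoid_scheme \<Rightarrow> 'a set \<Rightarrow> nat \<Rightarrow> 'a set" where
  "lower_central_in G K 0 = K"
| "lower_central_in G K (Suc n) = commutator G (lower_central_in G K n) K"

context group begin

lemma inv_mult_cancel [simp]: "x \<in> carrier G \<Longrightarrow> y \<in> carrier G \<Longrightarrow> x \<otimes> (inv x \<otimes> y) = y"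
  by (simp flip: m_assoc)

lemma mult_inv_cancel [simp]: "x \<in> carrier G \<Longrightarrow> y \<in> carrier G \<Longrightarrow> inv x \<otimes> (x \<otimes> y) = y"
  by (simp flip: m_assoc)

lemma commutator_set_subset:
  assumes "subgroup K G" "A \<subseteq> K" "B \<subseteq> K"
  shows "commutator_set G A B \<subseteq> K"
  using assms unfolding commutator_set_def
  by (auto intro!: subgroup.m_closed subgroup.m_inv_closed)

lemma commutator_subset:
  assumes "subgroup K G" "A \<subseteq> K" "B \<subseteq> K"
  shows "commutator G A B \<subseteq> K"
  unfolding commutator_def by (rule generate_subgroup_incl[OF commutator_set_subset[OF assms] assms(1)])

lemma commutator_is_subgroup:
  assumes "A \<subseteq> carrier G" "B \<subseteq> carrier G"
  shows "subgroup (commutator G A B) G"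
  unfolding commutator_def
  by (rule generate_is_subgroup[OF commutator_set_subset[OF subgroup_self assms]])

lemma commutator_mono:
  assumes "A \<subseteq> A'" "B \<subseteq> B'"
  shows "commutator G A B \<subseteq> commutator G A' B'"
  unfolding commutator_def commutator_set_def using assms by (intro mono_generate) blast

lemma commutator_memI:
  "a \<in> A \<Longrightarrow> b \<in> B \<Longrightarrow> a \<otimes> b \<otimes> inv a \<otimes> inv b \<in> commutator G A B"
  unfolding commutator_def commutator_set_def by (rule generate.incl) blast

lemma commutator_subset_normal:
  assumes "N \<lhd> G" "A \<subseteq> carrier G" "B \<subseteq> carrier G"
    and "\<And>a b. a \<in> A \<Longrightarrow> b \<in> B \<Longrightarrow> a \<otimes> b \<otimes> inv a \<otimes> inv b \<in> N"
  shows "commutator G A B \<subseteq> N"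
  unfolding commutator_def commutator_set_def
  using assms(4) by (intro generate_subgroup_incl[OF _ normal_imp_subgroup[OF assms(1)]]) blast

lemma conj_commutator:
  assumes "g \<in> carrier G" "a \<in> carrier G" "b \<in> carrier G"
  shows "g \<otimes> (a \<otimes> b \<otimes> inv a \<otimes> inv b) \<otimes> inv g
    = (g \<otimes> a \<otimes> inv g) \<otimes> (g \<otimes> b \<otimes> inv g) \<otimes> inv (g \<otimes> a \<otimes> inv g) \<otimes> inv (g \<otimes> b \<otimes> inv g)"
  using assms by (simp add: m_assoc inv_mult_group)

lemma commutator_normal:
  assumes "A \<lhd> G" "B \<lhd> G"
  shows "commutator G A B \<lhd> G"
  unfolding commutator_def
proof (rule normal_generateI)
  interpret A: normal A G by fact
  interpret B: normal B G by fact
  show "commutator_set G A B \<subseteq> carrier G"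
    by (rule commutator_set_subset[OF subgroup_self A.subset B.subset])
  fix c g assume "c \<in> commutator_set G A B" and g: "g \<in> carrier G"
  then obtain a b where ab: "a \<in> A" "b \<in> B" "c = a \<otimes> b \<otimes> inv a \<otimes> inv b"
    unfolding commutator_set_def by blast
  have "g \<otimes> a \<otimes> inv g \<in> A" "g \<otimes> b \<otimes> inv g \<in> B"
    using ab g A.inv_op_closed2 B.inv_op_closed2 by auto
  then show "g \<otimes> c \<otimes> inv g \<in> commutator_set G A B"
    unfolding commutator_set_def ab(3) conj_commutator[OF g A.mem_carrier[OF ab(1)] B.mem_carrier[OF ab(2)]]
    by blast
qed

lemma commutator_subset_left:
  assumes "A \<lhd> G" "B \<subseteq> carrier G"
  shows "commutator G A B \<subseteq> A"
proof (rule commutator_subset_normal[OF assms(1) normal_imp_subgroup[THEN subgroup.subset, OF assms(1)] assms(2)])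
  interpret A: normal A G by fact
  fix a b assume ab: "a \<in> A" "b \<in> B"
  have "a \<otimes> (b \<otimes> inv a \<otimes> inv b) \<in> A"
    by (rule A.m_closed[OF ab(1) A.inv_op_closed2[OF _ A.m_inv_closed]]) (use ab assms(2) in auto)
  then show "a \<otimes> b \<otimes> inv a \<otimes> inv b \<in> A"
    using ab assms(2) A.mem_carrier by (simp add: m_assoc subsetD)
qed

lemma commutator_subset_right:
  assumes "A \<subseteq> carrier G" "B \<lhd> G"
  shows "commutator G A B \<subseteq> B"
proof (rule commutator_subset_normal[OF assms(2) assms(1) normal_imp_subgroup[THEN subgroup.subset, OF assms(2)]])
  interpret B: normal B G by fact
  fix a b assume ab: "a \<in> A" "b \<in> B"
  show "a \<otimes> b \<otimes> inv a \<otimes> inv b \<in> B"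
    by (rule B.m_closed[OF B.inv_op_closed2 B.m_inv_closed]) (use ab assms(1) in auto)
qed

lemma commutator_elem_eq_one_iff:
  assumes "a \<in> carrier G" "b \<in> carrier G"
  shows "a \<otimes> b \<otimes> inv a \<otimes> inv b = \<one> \<longleftrightarrow> a \<otimes> b = b \<otimes> a"
proof -
  have "a \<otimes> b \<otimes> inv a \<otimes> inv b = (a \<otimes> b) \<otimes> inv (b \<otimes> a)"
    using assms by (simp add: m_assoc inv_mult_group)
  then show ?thesis
    using assms inv_solve_right'[of \<one> "a \<otimes> b" "b \<otimes> a"] by simp
qed

lemma commutator_eq_one:
  assumes "A \<subseteq> carrier G" "B \<subseteq> carrier G" "\<And>a b. a \<in> A \<Longrightarrow> b \<in> B \<Longrightarrow> a \<otimes> b = b \<otimes> a"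
  shows "commutator G A B = {\<one>}"
proof -
  have "commutator_set G A B \<subseteq> {\<one>}"
  proof
    fix c assume "c \<in> commutator_set G A B"
    then obtain a b where ab: "a \<in> A" "b \<in> B" "c = a \<otimes> b \<otimes> inv a \<otimes> inv b"
      unfolding commutator_set_def by blast
    have "a \<in> carrier G" "b \<in> carrier G"
      using ab assms(1,2) by blast+
    then show "c \<in> {\<one>}"
      using ab(3) assms(3)[OF ab(1,2)] commutator_elem_eq_one_iff by blast
  qed
  then have "commutator G A B \<subseteq> {\<one>}"
    unfolding commutator_def using mono_generate generate_one by metis
  then show ?thesis
    unfolding commutator_def using generate.one by blast
qed

lemma derived_eq_commutator: "derived G K = commutator G K K"
  unfolding derived_def commutator_def commutator_set_def by (rule arg_cong[of _ _ "generate G"]) blast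

lemma commutator_set_consistent:
  assumes "subgroup K G" "A \<subseteq> K" "B \<subseteq> K"
  shows "commutator_set (G\<lparr>carrier := K\<rparr>) A B = commutator_set G A B"
proof -
  have "a \<otimes> b \<otimes> inv\<^bsub>G\<lparr>carrier := K\<rparr>\<^esub> a \<otimes> inv\<^bsub>G\<lparr>carrier := K\<rparr>\<^esub> b = a \<otimes> b \<otimes> inv a \<otimes> inv b"
    if "a \<in> A" "b \<in> B" for a b
    using that assms m_inv_consistent by (simp add: subsetD)
  then show ?thesis
    unfolding commutator_set_def by force
qed

lemma lower_central_in_subset:
  assumes "subgroup M G" "K \<subseteq> M"
  shows "lower_central_in G K n \<subseteq> M"
  by (induction n) (simp_all add: assms commutator_subset)

lemma lower_central_in_subgroup:
  assumes "subgroup K G"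
  shows "subgroup (lower_central_in G K n) G"
proof (cases n)
  case (Suc m)
  have "lower_central_in G K m \<subseteq> carrier G" "K \<subseteq> carrier G"
    using lower_central_in_subset[OF assms subset_refl] subgroup.subset[OF assms] by auto
  then show ?thesis
    using Suc commutator_is_subgroup by simp
qed (simp add: assms)

lemma lower_central_in_normal:
  assumes "K \<lhd> G"
  shows "lower_central_in G K n \<lhd> G"
  by (induction n) (simp_all add: assms commutator_normal)

lemma lower_central_in_mono: "M \<subseteq> K \<Longrightarrow> lower_central_in G M n \<subseteq> lower_central_in G K n"
  by (induction n) (simp_all add: commutator_mono)

lemma lower_central_in_antimono:
  assumes "K \<lhd> G" "m \<le> n"
  shows "lower_central_in G K n \<subseteq> lower_central_in G K m"
  using assms(2)
proof (induction n rule: dec_induct)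
  case (step n)
  have "lower_central_in G K (Suc n) \<subseteq> lower_central_in G K n"
    using commutator_subset_left[OF lower_central_in_normal[OF assms(1)] normal.axioms(1)[OF assms(1), THEN subgroup.subset]]
    by simp
  with step.IH show ?case by blast
qed simp

lemma lower_central_subgroup:
  assumes "subgroup K G"
  shows "lower_central (G\<lparr>carrier := K\<rparr>) n = lower_central_in G K n"
proof (induction n)
  case (Suc n)
  have LK: "lower_central_in G K n \<subseteq> K"
    by (rule lower_central_in_subset[OF assms subset_refl])
  have "lower_central (G\<lparr>carrier := K\<rparr>) (Suc n)
      = generate (G\<lparr>carrier := K\<rparr>) (commutator_set (G\<lparr>carrier := K\<rparr>) (lower_central_in G K n) K)"
    by (simp add: Suc commutator_set_def)
  also have "\<dots> = generate G (commutator_set G (lower_central_in G K n) K)"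
    using commutator_set_consistent[OF assms LK subset_refl]
      generate_consistent[OF commutator_set_subset[OF assms LK subset_refl] assms] by simp
  finally show ?case by (simp add: commutator_def)
qed simp

lemma nilpotent_subgroup_iff:
  assumes "subgroup K G"
  shows "nilpotent_group (G\<lparr>carrier := K\<rparr>) \<longleftrightarrow> (\<exists>n. lower_central_in G K n = {\<one>})"
  unfolding nilpotent_group_def lower_central_subgroup[OF assms]
  using subgroup.subgroup_is_group[OF assms is_group] by simp

lemma nilpotent_subgroup_mono:
  assumes "subgroup M G" "subgroup K G" "M \<subseteq> K" "nilpotent_group (G\<lparr>carrier := K\<rparr>)"
  shows "nilpotent_group (G\<lparr>carrier := M\<rparr>)"
proof -
  obtain n where "lower_central_in G K n = {\<one>}"
    using assms(2,4) nilpotent_subgroup_iff by blast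
  then have "lower_central_in G M n \<subseteq> {\<one>}"
    using lower_central_in_mono[OF assms(3)] by blast
  moreover have "\<one> \<in> lower_central_in G M n"
    using subgroup.one_closed[OF lower_central_in_subgroup[OF assms(1)]] .
  ultimately have "lower_central_in G M n = {\<one>}"
    by blast
  then show ?thesis
    using nilpotent_subgroup_iff[OF assms(1)] by blast
qed

end

lemma (in group_hom) image_commutator_set:
  assumes "A \<subseteq> carrier G" "B \<subseteq> carrier G"
  shows "h ` commutator_set G A B = commutator_set H (h ` A) (h ` B)"
proof -
  have hom: "h (a \<otimes> b \<otimes> inv a \<otimes> inv b) = h a \<otimes>\<^bsub>H\<^esub> h b \<otimes>\<^bsub>H\<^esub> inv\<^bsub>H\<^esub> h a \<otimes>\<^bsub>H\<^esub> inv\<^bsub>H\<^esub> h b"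
    if "a \<in> A" "b \<in> B" for a b
    using that assms by (simp add: subsetD)
  show ?thesis
  proof (intro equalityI subsetI)
    fix y assume "y \<in> h ` commutator_set G A B"
    then obtain a b where ab: "a \<in> A" "b \<in> B" "y = h (a \<otimes> b \<otimes> inv a \<otimes> inv b)"
      unfolding commutator_set_def by blast
    then show "y \<in> commutator_set H (h ` A) (h ` B)"
      unfolding commutator_set_def using hom[OF ab(1,2)] by force
  next
    fix y assume "y \<in> commutator_set H (h ` A) (h ` B)"
    then obtain a b where ab: "a \<in> A" "b \<in> B"
      and y: "y = h a \<otimes>\<^bsub>H\<^esub> h b \<otimes>\<^bsub>H\<^esub> inv\<^bsub>H\<^esub> h a \<otimes>\<^bsub>H\<^esub> inv\<^bsub>H\<^esub> h b"
      unfolding commutator_set_def by blast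
    have "a \<otimes> b \<otimes> inv a \<otimes> inv b \<in> commutator_set G A B"
      unfolding commutator_set_def using ab by blast
    then show "y \<in> h ` commutator_set G A B"
      using y hom[OF ab] by (metis image_eqI)
  qed
qed

lemma (in group_hom) image_commutator:
  assumes "A \<subseteq> carrier G" "B \<subseteq> carrier G"
  shows "h ` commutator G A B = commutator H (h ` A) (h ` B)"
  unfolding commutator_def
  using generate_img[OF G.commutator_set_subset[OF G.subgroup_self assms]] image_commutator_set[OF assms]
  by simp

lemma (in group_hom) image_lower_central_in:
  assumes "K \<subseteq> carrier G"
  shows "h ` lower_central_in G K n = lower_central_in H (h ` K) n"
  by (induction n)
    (simp_all add: assms image_commutator G.lower_central_in_subset[OF G.subgroup_self])

lemma (in group_hom) nilpotent_image:
  assumes "subgroup K G" "nilpotent_group (G\<lparr>carrier := K\<rparr>)"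
  shows "nilpotent_group (H\<lparr>carrier := h ` K\<rparr>)"
proof -
  obtain n where n: "lower_central_in G K n = {\<one>\<^bsub>G\<^esub>}"
    using assms G.nilpotent_subgroup_iff by blast
  have "lower_central_in H (h ` K) n = h ` lower_central_in G K n"
    using image_lower_central_in[OF subgroup.subset[OF assms(1)]] by simp
  also have "\<dots> = {\<one>\<^bsub>H\<^esub>}"
    using n by simp
  finally show ?thesis
    using H.nilpotent_subgroup_iff[OF subgroup_img_is_subgroup[OF assms(1)]] by blast
qed

section \<open>Fitting's theorem\<close>

context group begin

lemma normal_Int:
  assumes "M \<lhd> G" "N \<lhd> G"
  shows "M \<inter> N \<lhd> G"
  using assms unfolding normal_inv_iff by (auto intro: subgroup_Int)

lemma normal_generate_Union:
  assumes "\<And>N. N \<in> \<N> \<Longrightarrow> N \<lhd> G"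
  shows "generate G (\<Union>\<N>) \<lhd> G"
proof (rule normal_generateI)
  show "\<Union>\<N> \<subseteq> carrier G"
    by (rule Union_least) (meson assms normal_imp_subgroup subgroup.subset)
  fix x g assume "x \<in> \<Union>\<N>" and g: "g \<in> carrier G"
  then obtain N where "N \<in> \<N>" "x \<in> N"
    by blast
  then show "g \<otimes> x \<otimes> inv g \<in> \<Union>\<N>"
    using normal.inv_op_closed2[OF assms g] by blast
qed

lemma generate_of_subgroup: "subgroup K G \<Longrightarrow> generate G K = K"
  using generate_subgroup_incl[of K K] generate.incl[of _ K G] by blast

lemma set_mult_supset:
  assumes "subgroup N G" "subgroup M G"
  shows "N \<subseteq> N <#> M" "M \<subseteq> N <#> M"
proof -
  show "N \<subseteq> N <#> M"
  proof
    fix x assume x: "x \<in> N"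
    then have "x = x \<otimes> \<one>"
      using subgroup.mem_carrier[OF assms(1)] by simp
    then show "x \<in> N <#> M"
      unfolding set_mult_def using x subgroup.one_closed[OF assms(2)] by blast
  qed
  show "M \<subseteq> N <#> M"
  proof
    fix x assume x: "x \<in> M"
    then have "x = \<one> \<otimes> x"
      using subgroup.mem_carrier[OF assms(2)] by simp
    then show "x \<in> N <#> M"
      unfolding set_mult_def using x subgroup.one_closed[OF assms(1)] by blast
  qed
qed

lemma commutator_mult_right_mem:
  assumes "N \<lhd> G" "u \<in> carrier G" "a \<in> carrier G" "b \<in> carrier G"
    and "u \<otimes> a \<otimes> inv u \<otimes> inv a \<in> N" "u \<otimes> b \<otimes> inv u \<otimes> inv b \<in> N"
  shows "u \<otimes> (a \<otimes> b) \<otimes> inv u \<otimes> inv (a \<otimes> b) \<in> N"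
proof -
  interpret N: normal N G by fact
  have "u \<otimes> (a \<otimes> b) \<otimes> inv u \<otimes> inv (a \<otimes> b)
      = (u \<otimes> a \<otimes> inv u \<otimes> inv a) \<otimes> (a \<otimes> (u \<otimes> b \<otimes> inv u \<otimes> inv b) \<otimes> inv a)"
    using assms(2-4) by (simp add: m_assoc inv_mult_group)
  then show ?thesis
    using assms(3,5,6) N.inv_op_closed2 by simp
qed

lemma commutator_mult_left_mem:
  assumes "N \<lhd> G" "u \<in> carrier G" "w \<in> carrier G" "x \<in> carrier G"
    and "u \<otimes> x \<otimes> inv u \<otimes> inv x \<in> N" "w \<otimes> x \<otimes> inv w \<otimes> inv x \<in> N"
  shows "(u \<otimes> w) \<otimes> x \<otimes> inv (u \<otimes> w) \<otimes> inv x \<in> N"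
proof -
  interpret N: normal N G by fact
  have "(u \<otimes> w) \<otimes> x \<otimes> inv (u \<otimes> w) \<otimes> inv x
      = (u \<otimes> (w \<otimes> x \<otimes> inv w \<otimes> inv x) \<otimes> inv u) \<otimes> (u \<otimes> x \<otimes> inv u \<otimes> inv x)"
    using assms(2-4) by (simp add: m_assoc inv_mult_group)
  then show ?thesis
    using assms(2,5,6) N.inv_op_closed2 by simp
qed

lemma commutator_inv_left_mem:
  assumes "N \<lhd> G" "u \<in> carrier G" "x \<in> carrier G" "u \<otimes> x \<otimes> inv u \<otimes> inv x \<in> N"
  shows "inv u \<otimes> x \<otimes> inv (inv u) \<otimes> inv x \<in> N"
proof -
  interpret N: normal N G by fact
  have "inv u \<otimes> x \<otimes> inv (inv u) \<otimes> inv x = inv u \<otimes> inv (u \<otimes> x \<otimes> inv u \<otimes> inv x) \<otimes> inv (inv u)"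
    using assms(2,3) by (simp add: m_assoc inv_mult_group)
  then show ?thesis
    using N.inv_op_closed2[OF inv_closed[OF assms(2)] N.m_inv_closed[OF assms(4)]] by simp
qed

lemma commutator_generate_subset:
  assumes "N \<lhd> G" "S \<subseteq> carrier G" "T \<subseteq> carrier G"
    and "\<And>s x. s \<in> S \<Longrightarrow> x \<in> T \<Longrightarrow> s \<otimes> x \<otimes> inv s \<otimes> inv x \<in> N"
  shows "commutator G (generate G S) T \<subseteq> N"
proof (rule commutator_subset_normal[OF assms(1) generate_incl[OF assms(2)] assms(3)])
  fix u x assume "u \<in> generate G S" and x: "x \<in> T"
  then show "u \<otimes> x \<otimes> inv u \<otimes> inv x \<in> N"
  proof (induction u rule: generate.induct)
    case one
    then show ?case
      using x assms(3) normal_imp_subgroup[OF assms(1)] by (auto simp: subgroup.one_closed)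
  next
    case (incl s)
    then show ?case by (rule assms(4))
  next
    case (inv s)
    then show ?case
      using commutator_inv_left_mem[OF assms(1) _ _ assms(4)] x assms(2,3) by blast
  next
    case (eng u w)
    have "u \<in> carrier G" "w \<in> carrier G"
      using eng.hyps generate_incl[OF assms(2)] by blast+
    then show ?case
      using commutator_mult_left_mem[OF assms(1) _ _ _ eng.IH] x assms(3) by blast
  qed
qed

end

text \<open>For normal \<open>A\<close>, an iterated commutator with at least \<open>i\<close> entries from \<open>A\<close> lies in
  \<open>weight_subgroup G A i\<close>: entries from elsewhere never leave a normal subgroup.\<close>

definition weight_subgroup :: "('a, 'b) monoid_scheme \<Rightarrow> 'a set \<Rightarrow> nat \<Rightarrow> 'a set" where
  "weight_subgroup G A i = (case i of 0 \<Rightarrow> carrier G | Suc n \<Rightarrow> lower_central_in G A n)"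

lemma weight_subgroup_0 [simp]: "weight_subgroup G A 0 = carrier G"
  and weight_subgroup_Suc [simp]: "weight_subgroup G A (Suc n) = lower_central_in G A n"
  by (simp_all add: weight_subgroup_def)

context group begin

lemma weight_subgroup_normal:
  "A \<lhd> G \<Longrightarrow> weight_subgroup G A i \<lhd> G"
  by (cases i) (simp_all add: normal_self lower_central_in_normal)

lemma commutator_weight_subgroup:
  assumes "A \<lhd> G"
  shows "commutator G (weight_subgroup G A i) A \<subseteq> weight_subgroup G A (Suc i)"
  using commutator_subset_right[OF subset_refl assms] by (cases i) simp_all

lemma weight_subgroup_eq_one:
  assumes "A \<lhd> G" "lower_central_in G A n = {\<one>}" "n < i"
  shows "weight_subgroup G A i = {\<one>}"
proof -
  obtain m where m: "i = Suc m" "n \<le> m"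
    using assms(3) less_iff_Suc_add by auto
  have "lower_central_in G A m \<subseteq> {\<one>}"
    using lower_central_in_antimono[OF assms(1) m(2)] assms(2) by simp
  moreover have "\<one> \<in> lower_central_in G A m"
    using lower_central_in_normal[OF assms(1)] normal_imp_subgroup subgroup.one_closed by blast
  ultimately show ?thesis
    using m(1) by auto
qed

lemma weight_subgroup_commutator_mem:
  assumes A: "A \<lhd> G" and B: "B \<lhd> G"
    and "s \<in> weight_subgroup G A i" "s \<in> weight_subgroup G B j" "a \<in> A"
  shows "s \<otimes> a \<otimes> inv s \<otimes> inv a \<in> weight_subgroup G A (Suc i) \<inter> weight_subgroup G B j"
proof
  show "s \<otimes> a \<otimes> inv s \<otimes> inv a \<in> weight_subgroup G A (Suc i)"
    using commutator_weight_subgroup[OF A] commutator_memI[OF assms(3,5)] by blast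
  have "A \<subseteq> carrier G"
    using A normal_imp_subgroup subgroup.subset by blast
  then show "s \<otimes> a \<otimes> inv s \<otimes> inv a \<in> weight_subgroup G B j"
    using commutator_subset_left[OF weight_subgroup_normal[OF B]] commutator_memI[OF assms(4,5)] by blast
qed

text \<open>Expanding iterated commutators of products \<open>ab\<close> multilinearly: in weight \<open>c + 1\<close>,
  \<open>i\<close> entries come from \<open>A\<close> and \<open>j\<close> from \<open>B\<close>.\<close>

lemma lower_central_in_set_mult_subset:
  assumes A: "A \<lhd> G" and B: "B \<lhd> G"
  shows "lower_central_in G (A <#> B) c
    \<subseteq> generate G (\<Union>{weight_subgroup G A i \<inter> weight_subgroup G B j | i j. i + j = Suc c})"
proof -
  let ?X = "weight_subgroup G A" and ?Y = "weight_subgroup G B"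
  let ?W = "\<lambda>c. generate G (\<Union>{?X i \<inter> ?Y j | i j. i + j = Suc c})"
  have W: "y \<in> ?W c" if "y \<in> ?X i" "y \<in> ?Y j" "i + j = Suc c" for y i j c
    using that by (intro generate.incl) blast
  have XY: "?X i \<lhd> G" "?Y i \<lhd> G" for i
    using A B weight_subgroup_normal by blast+
  then have XYc: "?X i \<subseteq> carrier G" "?Y i \<subseteq> carrier G" for i
    using normal_imp_subgroup subgroup.subset by blast+
  have Ac: "A \<subseteq> carrier G" "B \<subseteq> carrier G"
    using A B normal_imp_subgroup subgroup.subset by blast+
  show ?thesis
  proof (induction c)
    case 0
    have "a \<otimes> b \<in> ?W 0" if "a \<in> A" "b \<in> B" for a b
      using that Ac by (intro generate.eng W[of a "Suc 0" 0] W[of b 0 "Suc 0"]) auto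
    then show ?case
      unfolding set_mult_def by auto
  next
    case (Suc c)
    have N: "?W (Suc c) \<lhd> G"
      using XY normal_Int by (intro normal_generate_Union) blast
    have "lower_central_in G (A <#> B) (Suc c) \<subseteq> commutator G (?W c) (A <#> B)"
      using Suc.IH by (simp add: commutator_mono)
    also have "\<dots> \<subseteq> ?W (Suc c)"
    proof (rule commutator_generate_subset[OF N])
      show "\<Union>{?X i \<inter> ?Y j | i j. i + j = Suc c} \<subseteq> carrier G"
        using XYc by blast
      show "A <#> B \<subseteq> carrier G"
        using Ac setmult_subset_G by blast
      fix s x assume s: "s \<in> \<Union>{?X i \<inter> ?Y j | i j. i + j = Suc c}" and "x \<in> A <#> B"
      then obtain a b where ab: "a \<in> A" "b \<in> B" "x = a \<otimes> b"
        unfolding set_mult_def by blast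
      from s obtain i j where ij: "s \<in> ?X i" "s \<in> ?Y j" "i + j = Suc c"
        by blast
      have c: "s \<in> carrier G" "a \<in> carrier G" "b \<in> carrier G"
        using ij(1) XYc ab Ac by blast+
      have "s \<otimes> a \<otimes> inv s \<otimes> inv a \<in> ?X (Suc i) \<inter> ?Y j"
        by (rule weight_subgroup_commutator_mem[OF A B ij(1,2) ab(1)])
      moreover have "s \<otimes> b \<otimes> inv s \<otimes> inv b \<in> ?Y (Suc j) \<inter> ?X i"
        by (rule weight_subgroup_commutator_mem[OF B A ij(2,1) ab(2)])
      ultimately have "s \<otimes> a \<otimes> inv s \<otimes> inv a \<in> ?W (Suc c)" "s \<otimes> b \<otimes> inv s \<otimes> inv b \<in> ?W (Suc c)"
        using W[of _ "Suc i" j "Suc c"] W[of _ i "Suc j" "Suc c"] ij(3) by simp_all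
      then show "s \<otimes> x \<otimes> inv s \<otimes> inv x \<in> ?W (Suc c)"
        using commutator_mult_right_mem[OF N c] ab(3) by simp
    qed
    finally show ?case .
  qed
qed

lemma lower_central_in_set_mult_eq_one:
  assumes A: "A \<lhd> G" and B: "B \<lhd> G"
    and "lower_central_in G A m = {\<one>}" "lower_central_in G B n = {\<one>}"
  shows "lower_central_in G (A <#> B) (m + n) = {\<one>}"
proof -
  have trivial: "weight_subgroup G A i \<inter> weight_subgroup G B j \<subseteq> {\<one>}" if "i + j = Suc (m + n)" for i j
  proof (cases "m < i")
    case True
    then show ?thesis using weight_subgroup_eq_one[OF A assms(3) True] by simp
  next
    case False
    with that have "n < j" by simp
    then show ?thesis using weight_subgroup_eq_one[OF B assms(4)] by simp
  qed
  have gens: "\<Union>{weight_subgroup G A i \<inter> weight_subgroup G B j | i j. i + j = Suc (m + n)} \<subseteq> {\<one>}"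
  proof (rule Union_least)
    fix U assume "U \<in> {weight_subgroup G A i \<inter> weight_subgroup G B j | i j. i + j = Suc (m + n)}"
    then obtain i j where "U = weight_subgroup G A i \<inter> weight_subgroup G B j" "i + j = Suc (m + n)"
      by blast
    then show "U \<subseteq> {\<one>}"
      using trivial by simp
  qed
  have "generate G (\<Union>{weight_subgroup G A i \<inter> weight_subgroup G B j | i j. i + j = Suc (m + n)}) \<subseteq> {\<one>}"
    using mono_generate[OF gens] generate_one by simp
  then have "lower_central_in G (A <#> B) (m + n) \<subseteq> {\<one>}"
    using lower_central_in_set_mult_subset[OF A B, of "m + n"] by (rule order_trans[rotated])
  moreover have "\<one> \<in> lower_central_in G (A <#> B) (m + n)"
    using lower_central_in_normal[OF normal_subgroup_set_mult_closed[OF A B]]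
      normal_imp_subgroup subgroup.one_closed by blast
  ultimately show ?thesis
    by blast
qed

lemma nilpotent_set_mult:
  assumes "A \<lhd> G" "B \<lhd> G" "nilpotent_group (G\<lparr>carrier := A\<rparr>)" "nilpotent_group (G\<lparr>carrier := B\<rparr>)"
  shows "nilpotent_group (G\<lparr>carrier := A <#> B\<rparr>)"
proof -
  obtain m n where "lower_central_in G A m = {\<one>}" "lower_central_in G B n = {\<one>}"
    using assms nilpotent_subgroup_iff[OF normal_imp_subgroup] by meson
  then have "lower_central_in G (A <#> B) (m + n) = {\<one>}"
    by (rule lower_central_in_set_mult_eq_one[OF assms(1,2)])
  then show ?thesis
    using nilpotent_subgroup_iff[OF normal_imp_subgroup[OF normal_subgroup_set_mult_closed[OF assms(1,2)]]]
    by blast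
qed

lemma Fitting_normal: "Fitting G \<lhd> G"
  unfolding Fitting_def by (rule normal_generate_Union) blast

lemma nilpotent_normal_subset_Fitting:
  assumes "N \<lhd> G" "nilpotent_group (G\<lparr>carrier := N\<rparr>)"
  shows "N \<subseteq> Fitting G"
  unfolding Fitting_def using assms by (blast intro: generate.incl)

text \<open>By Fitting's theorem the nilpotent normal subgroups of a finite group are closed under
  products, so a maximal one contains all others.\<close>

lemma Fitting_nilpotent:
  assumes "finite (carrier G)"
  shows "nilpotent_group (G\<lparr>carrier := Fitting G\<rparr>)"
proof -
  define \<N> where "\<N> = {N. N \<lhd> G \<and> nilpotent_group (G\<lparr>carrier := N\<rparr>)}"
  have "N \<subseteq> carrier G" if "N \<in> \<N>" for N
    using that unfolding \<N>_def by (simp add: normal_imp_subgroup subgroup.subset)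
  then have fin: "finite \<N>"
    using finite_subset[of \<N> "Pow (carrier G)"] assms by blast
  have "nilpotent_group (G\<lparr>carrier := {\<one>}\<rparr>)"
    unfolding nilpotent_subgroup_iff[OF triv_subgroup] by (rule exI[of _ 0]) simp
  then have "{\<one>} \<in> \<N>"
    unfolding \<N>_def using one_is_normal by simp
  then obtain N where N: "N \<in> \<N>" and max: "\<forall>M\<in>\<N>. N \<le> M \<longrightarrow> N = M"
    using finite_has_maximal[OF fin] by (metis empty_iff)
  have "M \<subseteq> N" if M: "M \<in> \<N>" for M
  proof -
    have "N <#> M \<in> \<N>"
      using N M unfolding \<N>_def by (simp add: normal_subgroup_set_mult_closed nilpotent_set_mult)
    moreover have "N \<subseteq> N <#> M" "M \<subseteq> N <#> M"
      using N M set_mult_supset unfolding \<N>_def by (blast dest: normal_imp_subgroup)+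
    ultimately show ?thesis
      using max by (metis (no_types, lifting))
  qed
  then have "Fitting G = generate G N"
    unfolding Fitting_def \<N>_def[symmetric] using N by (metis Union_upper subset_antisym Union_least)
  also have "\<dots> = N"
    using N unfolding \<N>_def by (simp add: generate_of_subgroup normal_imp_subgroup)
  finally show ?thesis
    using N unfolding \<N>_def by simp
qed

lemma conj_group_hom: "g \<in> carrier G \<Longrightarrow> group_hom G G (\<lambda>x. g \<otimes> x \<otimes> inv g)"
  unfolding group_hom_def group_hom_axioms_def hom_def by (auto simp: is_group m_assoc)

lemma normal_subgroup_conj_image:
  assumes H: "H \<lhd> G" and N: "N \<lhd> G\<lparr>carrier := H\<rparr>" and g: "g \<in> carrier G"
  shows "(\<lambda>x. g \<otimes> x \<otimes> inv g) ` N \<lhd> G\<lparr>carrier := H\<rparr>"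
proof -
  interpret H: normal H G by fact
  interpret GH: group "G\<lparr>carrier := H\<rparr>"
    by (rule H.subgroup_is_group[OF is_group])
  interpret conj: group_hom G G "\<lambda>x. g \<otimes> x \<otimes> inv g"
    by (rule conj_group_hom[OF g])
  have sN: "subgroup N G"
    by (rule incl_subgroup[OF H.subgroup_axioms normal_imp_subgroup[OF N]])
  have NH: "N \<subseteq> H"
    using subgroup.subset[OF normal_imp_subgroup[OF N]] by simp
  have inv: "inv\<^bsub>G\<lparr>carrier := H\<rparr>\<^esub> h = inv h" if "h \<in> H" for h
    using m_inv_consistent[OF H.subgroup_axioms that] .
  have N_conj: "h \<otimes> n \<otimes> inv h \<in> N" if "h \<in> H" "n \<in> N" for h n
    using N that inv unfolding GH.normal_inv_iff by auto
  have img_H: "(\<lambda>x. g \<otimes> x \<otimes> inv g) ` N \<subseteq> H"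
    using NH H.inv_op_closed2[OF g] by blast
  have "h \<otimes> (g \<otimes> n \<otimes> inv g) \<otimes> inv h \<in> (\<lambda>x. g \<otimes> x \<otimes> inv g) ` N"
    if h: "h \<in> H" and n: "n \<in> N" for h n
  proof -
    have hc: "h \<in> carrier G" "n \<in> carrier G"
      using h n NH by auto
    let ?h' = "inv g \<otimes> h \<otimes> g"
    have "?h' \<in> H"
      using H.inv_op_closed1[OF g h] .
    then have "?h' \<otimes> n \<otimes> inv ?h' \<in> N"
      using N_conj n by blast
    moreover have "h \<otimes> (g \<otimes> n \<otimes> inv g) \<otimes> inv h = g \<otimes> (?h' \<otimes> n \<otimes> inv ?h') \<otimes> inv g"
      using g hc by (simp add: m_assoc inv_mult_group)
    ultimately show ?thesis
      by blast
  qed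
  then show ?thesis
    unfolding GH.normal_inv_iff
    using subgroup_incl[OF conj.subgroup_img_is_subgroup[OF sN] H.subgroup_axioms img_H] inv
    by auto
qed

lemma Fitting_of_normal_subgroup_normal:
  assumes fin: "finite (carrier G)" and H: "H \<lhd> G"
  shows "Fitting (G\<lparr>carrier := H\<rparr>) \<lhd> G"
proof -
  interpret H: normal H G by fact
  interpret GH: group "G\<lparr>carrier := H\<rparr>"
    by (rule H.subgroup_is_group[OF is_group])
  let ?\<Phi> = "Fitting (G\<lparr>carrier := H\<rparr>)"
  have \<Phi>_normal: "?\<Phi> \<lhd> G\<lparr>carrier := H\<rparr>"
    by (rule GH.Fitting_normal)
  then have \<Phi>_sub: "subgroup ?\<Phi> G"
    by (rule incl_subgroup[OF H.subgroup_axioms normal_imp_subgroup])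
  have "finite (carrier (G\<lparr>carrier := H\<rparr>))"
    using fin H.subset finite_subset by auto
  then have \<Phi>_nil: "nilpotent_group (G\<lparr>carrier := ?\<Phi>\<rparr>)"
    using GH.Fitting_nilpotent by simp
  have "g \<otimes> x \<otimes> inv g \<in> ?\<Phi>" if g: "g \<in> carrier G" and x: "x \<in> ?\<Phi>" for g x
  proof -
    interpret conj: group_hom G G "\<lambda>x. g \<otimes> x \<otimes> inv g"
      by (rule conj_group_hom[OF g])
    have "(\<lambda>x. g \<otimes> x \<otimes> inv g) ` ?\<Phi> \<subseteq> ?\<Phi>"
      using GH.nilpotent_normal_subset_Fitting[OF normal_subgroup_conj_image[OF H \<Phi>_normal g]]
        conj.nilpotent_image[OF \<Phi>_sub \<Phi>_nil] by simp
    then show ?thesis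
      using x by blast
  qed
  then show ?thesis
    using \<Phi>_sub normal_inv_iff by blast
qed

lemma Fitting_normal_subgroup:
  assumes fin: "finite (carrier G)" and H: "H \<lhd> G"
  shows "Fitting (G\<lparr>carrier := H\<rparr>) = H \<inter> Fitting G"
proof
  interpret H: normal H G by fact
  interpret GH: group "G\<lparr>carrier := H\<rparr>"
    by (rule H.subgroup_is_group[OF is_group])
  have "finite (carrier (G\<lparr>carrier := H\<rparr>))"
    using fin H.subset finite_subset by auto
  then have "Fitting (G\<lparr>carrier := H\<rparr>) \<subseteq> Fitting G"
    using nilpotent_normal_subset_Fitting[OF Fitting_of_normal_subgroup_normal[OF fin H]]
      GH.Fitting_nilpotent by simp
  moreover have "Fitting (G\<lparr>carrier := H\<rparr>) \<subseteq> H"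
    using subgroup.subset[OF normal_imp_subgroup[OF GH.Fitting_normal]] by simp
  ultimately show "Fitting (G\<lparr>carrier := H\<rparr>) \<subseteq> H \<inter> Fitting G"
    by blast
  have "Fitting G \<inter> H \<lhd> G\<lparr>carrier := H\<rparr>"
    by (rule normal_Int_subgroup[OF H.subgroup_axioms Fitting_normal])
  moreover have "nilpotent_group (G\<lparr>carrier := Fitting G \<inter> H\<rparr>)"
    using nilpotent_subgroup_mono[OF subgroup_Int[OF normal_imp_subgroup[OF Fitting_normal] H.subgroup_axioms]
        normal_imp_subgroup[OF Fitting_normal] _ Fitting_nilpotent[OF fin]]
    by blast
  ultimately show "H \<inter> Fitting G \<subseteq> Fitting (G\<lparr>carrier := H\<rparr>)"
    using GH.nilpotent_normal_subset_Fitting by (simp add: Int_commute)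
qed

end

section \<open>The centraliser of the Fitting subgroup\<close>

context group begin

lemma centraliser_subgroup:
  assumes H: "subgroup H G" and F: "F \<subseteq> carrier G"
  shows "subgroup {h \<in> H. \<forall>f\<in>F. h \<otimes> f = f \<otimes> h} G" (is "subgroup ?C G")
proof
  show "?C \<subseteq> carrier G"
    using subgroup.subset[OF H] by blast
  show "\<one> \<in> ?C"
    using F subgroup.one_closed[OF H] by auto
next
  fix a b assume a: "a \<in> ?C" and b: "b \<in> ?C"
  then have c: "a \<in> carrier G" "b \<in> carrier G"
    using subgroup.mem_carrier[OF H] by auto
  show "a \<otimes> b \<in> ?C"
  proof (intro CollectI conjI ballI)
    fix f assume f: "f \<in> F"
    then have "a \<otimes> f = f \<otimes> a" "b \<otimes> f = f \<otimes> b"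
      using a b by auto
    then show "a \<otimes> b \<otimes> f = f \<otimes> (a \<otimes> b)"
      using c f F by (metis subsetD m_assoc)
  qed (use a b subgroup.m_closed[OF H] in auto)
next
  fix a assume a: "a \<in> ?C"
  then have c: "a \<in> carrier G"
    using subgroup.mem_carrier[OF H] by auto
  show "inv a \<in> ?C"
  proof (intro CollectI conjI ballI)
    fix f assume f: "f \<in> F"
    then have "inv a \<otimes> (a \<otimes> f) \<otimes> inv a = inv a \<otimes> (f \<otimes> a) \<otimes> inv a"
      using a by auto
    then show "inv a \<otimes> f = f \<otimes> inv a"
      using c f F by (simp add: m_assoc subsetD)
  qed (use a subgroup.m_inv_closed[OF H] in auto)
qed

lemma centraliser_normal:
  assumes H: "H \<lhd> G" and F: "F \<lhd> G"
  shows "{h \<in> H. \<forall>f\<in>F. h \<otimes> f = f \<otimes> h} \<lhd> G" (is "?C \<lhd> G")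
proof -
  interpret H: normal H G by fact
  interpret F: normal F G by fact
  have "g \<otimes> c \<otimes> inv g \<in> ?C" if g: "g \<in> carrier G" and c: "c \<in> ?C" for g c
  proof (intro CollectI conjI ballI)
    show "g \<otimes> c \<otimes> inv g \<in> H"
      using H.inv_op_closed2[OF g] c by blast
    fix f assume f: "f \<in> F"
    have cc: "c \<in> carrier G" "f \<in> carrier G"
      using c f by auto
    have "c \<otimes> (inv g \<otimes> f \<otimes> g) = (inv g \<otimes> f \<otimes> g) \<otimes> c"
      using c F.inv_op_closed1[OF g f] by blast
    then have "g \<otimes> (c \<otimes> (inv g \<otimes> f \<otimes> g)) \<otimes> inv g = g \<otimes> ((inv g \<otimes> f \<otimes> g) \<otimes> c) \<otimes> inv g"
      by simp
    then show "g \<otimes> c \<otimes> inv g \<otimes> f = f \<otimes> (g \<otimes> c \<otimes> inv g)"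
      using g cc by (simp add: m_assoc)
  qed
  then show ?thesis
    using centraliser_subgroup[OF H.subgroup_axioms F.subset] normal_inv_iff by blast
qed

text \<open>Such a \<open>K\<close> is nilpotent of class at most 2.\<close>

lemma centralising_subset_Fitting:
  assumes K: "K \<lhd> G" and derived: "derived G K \<subseteq> Fitting G"
    and central: "\<forall>k\<in>K. \<forall>f\<in>Fitting G. k \<otimes> f = f \<otimes> k"
  shows "K \<subseteq> Fitting G"
proof -
  have Kc: "K \<subseteq> carrier G"
    using K normal_imp_subgroup subgroup.subset by blast
  have L1: "lower_central_in G K 1 \<subseteq> Fitting G"
    using derived by (simp add: derived_eq_commutator)
  have "lower_central_in G K 2 = commutator G (lower_central_in G K 1) K"
    by (simp add: numeral_2_eq_2)
  also have "\<dots> = {\<one>}"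
  proof (rule commutator_eq_one[OF lower_central_in_subset[OF subgroup_self Kc] Kc])
    fix a b assume "a \<in> lower_central_in G K 1" "b \<in> K"
    then show "a \<otimes> b = b \<otimes> a"
      using L1 central by auto
  qed
  finally show ?thesis
    using nilpotent_normal_subset_Fitting[OF K] nilpotent_subgroup_iff[OF normal_imp_subgroup[OF K]]
    by blast
qed

lemma derived_iter_consistent:
  assumes "subgroup H G"
  shows "(derived (G\<lparr>carrier := H\<rparr>) ^^ n) H = (derived G ^^ n) H"
proof (induction n)
  case (Suc n)
  have "(derived G ^^ n) H \<subseteq> H"
    using mono_exp_of_derived[OF subset_refl] derived_incl[OF _ assms]
    by (induction n) auto
  then show ?case
    using Suc derived_consistent[OF _ assms] by simp
qed simp

lemma solvable_imp_derived_iter_eq_one: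
  assumes "subgroup H G" "solvable (G\<lparr>carrier := H\<rparr>)"
  shows "\<exists>k. (derived G ^^ k) H = {\<one>}"
proof -
  interpret GH: group "G\<lparr>carrier := H\<rparr>"
    by (rule subgroup.subgroup_is_group[OF assms(1) is_group])
  obtain k where "(derived (G\<lparr>carrier := H\<rparr>) ^^ k) H = {\<one>}"
    using assms(2) GH.solvable_iff_trivial_derived_seq by auto
  then show ?thesis
    using derived_iter_consistent[OF assms(1)] by auto
qed

text \<open>Descend along the derived series of the centraliser: a term whose derived subgroup lies
  in \<open>F(G)\<close> lies in \<open>F(G)\<close> itself.\<close>

lemma solvable_centraliser_Fitting:
  assumes H: "H \<lhd> G" and sol: "solvable (G\<lparr>carrier := H\<rparr>)"
  shows "{h \<in> H. \<forall>f\<in>Fitting G. h \<otimes> f = f \<otimes> h} \<subseteq> Fitting G" (is "?C \<subseteq> _")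
proof -
  have C: "?C \<lhd> G"
    by (rule centraliser_normal[OF H Fitting_normal])
  define D where "D n = (derived G ^^ n) ?C" for n
  have D_normal: "D n \<lhd> G" for n
    unfolding D_def by (induction n) (simp_all add: C derived_is_normal)
  have D_C: "D n \<subseteq> ?C" for n
    unfolding D_def
    by (induction n) (use derived_incl normal_imp_subgroup[OF C] in auto)
  obtain k where k: "(derived G ^^ k) H = {\<one>}"
    using solvable_imp_derived_iter_eq_one[OF normal_imp_subgroup[OF H] sol] by blast
  have "D k \<subseteq> Fitting G"
    using mono_exp_of_derived[of ?C H k] k subgroup.one_closed[OF normal_imp_subgroup[OF Fitting_normal]]
    unfolding D_def by auto
  have "D n \<subseteq> Fitting G" if "n \<le> k" for n
    using that
  proof (induction n rule: inc_induct)
    case (step n)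
    have "derived G (D n) \<subseteq> Fitting G"
      using step.IH by (simp add: D_def)
    moreover have "\<forall>x\<in>D n. \<forall>f\<in>Fitting G. x \<otimes> f = f \<otimes> x"
      using D_C by blast
    ultimately show ?case
      by (rule centralising_subset_Fitting[OF D_normal])
  qed fact
  then have "D 0 \<subseteq> Fitting G"
    by blast
  then show ?thesis
    unfolding D_def by simp
qed

end

section \<open>Abelian groups of squarefree exponent\<close>

lemma (in monoid) nat_pow_eq_one_dvd:
  assumes "x \<in> carrier G" "x [^] (a::nat) = \<one>" "a dvd b"
  shows "x [^] b = \<one>"
  using assms by (auto simp: nat_pow_pow[symmetric] elim!: dvdE)

lemma (in group) pow_eq_if_cong:
  assumes "x \<in> carrier G" "x [^] (m::nat) = \<one>" "[a = b] (mod m)"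
  shows "x [^] a = x [^] b"
proof -
  have "ord x dvd m"
    using assms(1,2) pow_eq_id by blast
  then have "[a = b] (mod ord x)"
    using assms(3) cong_dvd_modulus_nat by blast
  then have "[int b = int a] (mod int (ord x))"
    by (simp add: cong_int_iff cong_sym)
  then have "int (ord x) dvd int b - int a"
    by (simp add: cong_iff_dvd_diff)
  then show ?thesis
    using int_pow_eq[OF assms(1), of "int a" "int b"] by (simp add: int_pow_int)
qed

text \<open>A plain monoid record, as \<open>dprod_elem_abelian\<close> requires of its factors.\<close>

definition torsion_subgroup :: "('a, 'b) monoid_scheme \<Rightarrow> nat \<Rightarrow> 'a monoid" where
  "torsion_subgroup G n =
     \<lparr>carrier = {x \<in> carrier G. x [^]\<^bsub>G\<^esub> n = \<one>\<^bsub>G\<^esub>}, monoid.mult = monoid.mult G, one = one G\<rparr>"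

lemma torsion_subgroup_simps [simp]:
  "carrier (torsion_subgroup G n) = {x \<in> carrier G. x [^]\<^bsub>G\<^esub> n = \<one>\<^bsub>G\<^esub>}"
  "monoid.mult (torsion_subgroup G n) = monoid.mult G"
  "one (torsion_subgroup G n) = one G"
  by (simp_all add: torsion_subgroup_def)

lemma nat_pow_torsion_subgroup [simp]: "x [^]\<^bsub>torsion_subgroup G n\<^esub> (k::nat) = x [^]\<^bsub>G\<^esub> k"
  unfolding nat_pow_def by simp

lemma (in comm_group) torsion_subgroup_comm_group: "comm_group (torsion_subgroup G n)"
proof (rule comm_groupI)
  fix x assume x: "x \<in> carrier (torsion_subgroup G n)"
  then have "inv x \<in> carrier (torsion_subgroup G n)"
    by (simp add: nat_pow_inv)
  moreover have "inv x \<otimes>\<^bsub>torsion_subgroup G n\<^esub> x = \<one>\<^bsub>torsion_subgroup G n\<^esub>"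
    using x by simp
  ultimately show "\<exists>y\<in>carrier (torsion_subgroup G n). y \<otimes>\<^bsub>torsion_subgroup G n\<^esub> x = \<one>\<^bsub>torsion_subgroup G n\<^esub>"
    by blast
qed (auto simp: nat_pow_distrib m_ac)

lemma (in comm_group) torsion_subgroup_elementary_abelian:
  "Factorial_Ring.prime p \<Longrightarrow> elementary_abelian (torsion_subgroup G p)"
  unfolding elementary_abelian_def using torsion_subgroup_comm_group by auto

lemma (in comm_group) pow_finprod:
  assumes "f \<in> A \<rightarrow> carrier G"
  shows "finprod G f A [^] (n::nat) = (\<Otimes>i\<in>A. f i [^] n)"
  using assms
proof (induction A rule: infinite_finite_induct)
  case (insert i A)
  then show ?case
    by (simp add: nat_pow_distrib Pi_iff)
qed simp_all

lemma (in comm_group) finprod_pow_eq_pow_sum: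
  assumes "x \<in> carrier G"
  shows "(\<Otimes>i\<in>A. x [^] e i) = x [^] (\<Sum>i\<in>A. e i :: nat)"
  using assms
proof (induction A rule: infinite_finite_induct)
  case (insert i A)
  have "(\<Otimes>j\<in>insert i A. x [^] e j) = x [^] e i \<otimes> (\<Otimes>j\<in>A. x [^] e j)"
    using insert.hyps insert.prems by (intro finprod_insert) auto
  also have "\<dots> = x [^] (e i + (\<Sum>j\<in>A. e j))"
    using insert.IH insert.prems by (simp add: nat_pow_mult)
  also have "e i + (\<Sum>j\<in>A. e j) = (\<Sum>j\<in>insert i A. e j)"
    using insert.hyps by simp
  finally show ?case .
qed simp_all

lemma chinese_remainder_idempotents:
  fixes S :: "nat set"
  assumes fin: "finite S" and prime: "\<forall>p\<in>S. Factorial_Ring.prime p"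
  obtains e :: "nat \<Rightarrow> nat"
  where "\<And>p q. q \<in> S \<Longrightarrow> [e p = (if q = p then 1 else 0)] (mod q)"
    and "\<And>p. p \<in> S \<Longrightarrow> [e p * p = 0] (mod (\<Prod>p\<in>S. p))"
    and "[(\<Sum>p\<in>S. e p) = 1] (mod (\<Prod>p\<in>S. p))"
proof -
  have coprime: "\<forall>p\<in>S. \<forall>q\<in>S. p \<noteq> q \<longrightarrow> coprime p q"
  proof (intro ballI impI)
    fix p q assume "p \<in> S" "q \<in> S" "p \<noteq> q"
    then show "coprime p q"
      using primes_coprime[of p q] prime by simp
  qed
  have "\<exists>e. \<forall>q\<in>S. [e = (if q = p then 1 else 0)] (mod q)" for p
    by (rule chinese_remainder_nat[OF fin coprime])
  then obtain e where e: "\<And>p q. q \<in> S \<Longrightarrow> [e p = (if q = p then 1 else 0)] (mod q)"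
    by metis
  have "[e p * p = 0] (mod (\<Prod>p\<in>S. p))" if p: "p \<in> S" for p
  proof (rule coprime_cong_prod_nat)
    fix q assume q: "q \<in> S"
    show "[e p * p = 0] (mod q)"
    proof (cases "q = p")
      case False
      then show ?thesis
        using cong_mult[OF e[OF q, of p] cong_refl[of p]] by simp
    qed (simp add: cong_0_iff)
  qed (use coprime in auto)
  moreover have "[(\<Sum>p\<in>S. e p) = 1] (mod (\<Prod>p\<in>S. p))"
  proof (rule coprime_cong_prod_nat)
    fix q assume q: "q \<in> S"
    have "[(\<Sum>p\<in>S. e p) = (\<Sum>p\<in>S. if q = p then 1 else 0)] (mod q)"
      by (rule cong_sum) (use e[OF q] in auto)
    then show "[(\<Sum>p\<in>S. e p) = 1] (mod q)"
      using fin q by simp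
  qed (use coprime in auto)
  ultimately show ?thesis
    using that e by blast
qed

context comm_group begin

text \<open>For idempotents \<open>e\<close> as above, \<open>x \<mapsto> (x\<^bsup>e p\<^esup>)\<^sub>p\<close> maps \<open>G\<close> onto the product of its
  \<open>p\<close>-torsion subgroups, with inverse \<open>y \<mapsto> \<Prod>\<^sub>p y p\<close>.\<close>

lemma torsion_components_hom:
  fixes e :: "nat \<Rightarrow> nat"
  assumes exp: "\<forall>x\<in>carrier G. x [^] m = \<one>" and e: "\<And>p. p \<in> S \<Longrightarrow> [e p * p = 0] (mod m)"
  shows "(\<lambda>x. \<lambda>p\<in>S. x [^] e p) \<in> hom G (product_group S (torsion_subgroup G))"
proof (rule homI)
  fix x assume x: "x \<in> carrier G"
  have "(x [^] e p) [^] p = \<one>" if "p \<in> S" for p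
    using pow_eq_if_cong[OF x exp[rule_format, OF x] e[OF that]] x by (simp add: nat_pow_pow)
  then show "(\<lambda>p\<in>S. x [^] e p) \<in> carrier (product_group S (torsion_subgroup G))"
    using x by auto
next
  fix x y assume "x \<in> carrier G" "y \<in> carrier G"
  then show "(\<lambda>p\<in>S. (x \<otimes> y) [^] e p)
      = (\<lambda>p\<in>S. x [^] e p) \<otimes>\<^bsub>product_group S (torsion_subgroup G)\<^esub> (\<lambda>p\<in>S. y [^] e p)"
    by (auto simp: nat_pow_distrib intro!: restrict_ext)
qed

lemma finprod_torsion_components:
  fixes e :: "nat \<Rightarrow> nat"
  assumes x: "x \<in> carrier G" and exp: "\<forall>x\<in>carrier G. x [^] m = \<one>"
    and e: "[(\<Sum>p\<in>S. e p) = 1] (mod m)"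
  shows "finprod G (\<lambda>p\<in>S. x [^] e p) S = x"
proof -
  have "finprod G (\<lambda>p\<in>S. x [^] e p) S = (\<Otimes>p\<in>S. x [^] e p)"
    by (rule finprod_cong) (auto simp: x)
  also have "\<dots> = x [^] (\<Sum>p\<in>S. e p)"
    by (rule finprod_pow_eq_pow_sum[OF x])
  also have "\<dots> = x [^] (1::nat)"
    by (rule pow_eq_if_cong[OF x exp[rule_format, OF x] e])
  finally show ?thesis
    using x by simp
qed

lemma torsion_components_finprod:
  fixes e :: "nat \<Rightarrow> nat"
  assumes fin: "finite S" and y: "y \<in> carrier (product_group S (torsion_subgroup G))" and q: "q \<in> S"
    and e: "\<And>p. p \<in> S \<Longrightarrow> [e q = (if p = q then 1 else 0)] (mod p)"
  shows "finprod G y S [^] e q = y q"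
proof -
  have yc: "y p \<in> carrier G" "y p [^] p = \<one>" if "p \<in> S" for p
    using y that by auto
  have pow: "y p [^] e q = (if p = q then y p else \<one>)" if p: "p \<in> S" for p
    using pow_eq_if_cong[OF yc[OF p] e[OF p]] yc(1)[OF p] by (auto split: if_splits)
  have "finprod G y S [^] e q = (\<Otimes>p\<in>S. y p [^] e q)"
    using yc by (simp add: pow_finprod Pi_iff)
  also have "\<dots> = (\<Otimes>p\<in>S. if p = q then y p else \<one>)"
    by (rule finprod_cong') (use yc pow in auto)
  also have "\<dots> = y q"
    using finprod_singleton_swap[OF q fin] yc by (simp add: Pi_iff)
  finally show ?thesis .
qed

theorem squarefree_exponent_imp_dprod_elem_abelian:
  fixes S :: "nat set"
  assumes fin: "finite S" and prime: "\<forall>p\<in>S. Factorial_Ring.prime p"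
    and exp: "\<forall>x\<in>carrier G. x [^] (\<Prod>p\<in>S. p) = \<one>"
  shows "dprod_elem_abelian G"
proof -
  obtain e where e: "\<And>p q. q \<in> S \<Longrightarrow> [e p = (if q = p then 1 else 0)] (mod q)"
    and e_mult: "\<And>p. p \<in> S \<Longrightarrow> [e p * p = 0] (mod (\<Prod>p\<in>S. p))"
    and e_sum: "[(\<Sum>p\<in>S. e p) = 1] (mod (\<Prod>p\<in>S. p))"
    using chinese_remainder_idempotents[OF fin prime] by blast
  let ?P = "product_group S (torsion_subgroup G)"
  let ?\<phi> = "\<lambda>x. \<lambda>p\<in>S. x [^] e p"
  have hom: "?\<phi> \<in> hom G ?P"
    by (rule torsion_components_hom[OF exp e_mult])
  have "bij_betw ?\<phi> (carrier G) (carrier ?P)"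
  proof (rule bij_betw_byWitness[where f' = "\<lambda>y. finprod G y S"])
    show "\<forall>x\<in>carrier G. finprod G (?\<phi> x) S = x"
      using finprod_torsion_components[OF _ exp e_sum] by blast
    show "\<forall>y\<in>carrier ?P. ?\<phi> (finprod G y S) = y"
    proof
      fix y assume y: "y \<in> carrier ?P"
      have "finprod G y S [^] e q = y q" if "q \<in> S" for q
        by (rule torsion_components_finprod[OF fin y that]) (rule e)
      then show "?\<phi> (finprod G y S) = y"
        using y by (auto simp: PiE_iff extensional_def)
    qed
    show "?\<phi> ` carrier G \<subseteq> carrier ?P"
      using hom by (auto simp: hom_def)
    show "(\<lambda>y. finprod G y S) ` carrier ?P \<subseteq> carrier G"
      by (auto simp: PiE_iff Pi_iff)
  qed
  then have "G \<cong> ?P"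
    using hom unfolding is_iso_def iso_def by blast
  then show ?thesis
    unfolding dprod_elem_abelian_def
    using fin prime torsion_subgroup_elementary_abelian by blast
qed

end

lemma nat_pow_product_group:
  "x [^]\<^bsub>product_group I E\<^esub> (n::nat) = (\<lambda>i\<in>I. x i [^]\<^bsub>E i\<^esub> n)"
proof (induction n)
  case 0
  show ?case
    by (simp only: nat_pow_0 one_product_group)
next
  case (Suc n)
  show ?case
    unfolding nat_pow_Suc Suc mult_product_group by (intro restrict_ext) (simp add: nat_pow_Suc)
qed

lemma product_group_exponent:
  assumes "\<And>i. i \<in> I \<Longrightarrow> monoid (E i)"
    and "\<And>i y. i \<in> I \<Longrightarrow> y \<in> carrier (E i) \<Longrightarrow> y [^]\<^bsub>E i\<^esub> (n i :: nat) = \<one>\<^bsub>E i\<^esub>"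
    and "\<And>i. i \<in> I \<Longrightarrow> n i dvd m" and "x \<in> carrier (product_group I E)"
  shows "x [^]\<^bsub>product_group I E\<^esub> m = \<one>\<^bsub>product_group I E\<^esub>"
proof -
  have "x [^]\<^bsub>product_group I E\<^esub> m = (\<lambda>i\<in>I. x i [^]\<^bsub>E i\<^esub> m)"
    by (rule nat_pow_product_group)
  also have "\<dots> = (\<lambda>i\<in>I. \<one>\<^bsub>E i\<^esub>)"
  proof (rule restrict_ext)
    fix i assume i: "i \<in> I"
    then have "x i \<in> carrier (E i)"
      using assms(4) by (auto simp: PiE_iff)
    then show "x i [^]\<^bsub>E i\<^esub> m = \<one>\<^bsub>E i\<^esub>"
      using monoid.nat_pow_eq_one_dvd[OF assms(1)[OF i]] assms(2,3) i by blast
  qed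
  finally show ?thesis
    by simp
qed

lemma (in group_hom) nat_pow_eq_one_if_inj:
  assumes "inj_on h (carrier G)" "x \<in> carrier G" "h x [^]\<^bsub>H\<^esub> (m::nat) = \<one>\<^bsub>H\<^esub>"
  shows "x [^] m = \<one>"
  using assms hom_nat_pow inj_onD[OF assms(1) _ G.nat_pow_closed[OF assms(2)] G.one_closed] by simp

lemma dprod_elem_abelian_imp_squarefree_exponent:
  fixes Q :: "('x, 'y) monoid_scheme"
  assumes Q: "group Q" and "dprod_elem_abelian Q"
  obtains S :: "nat set" where "finite S" "\<forall>p\<in>S. Factorial_Ring.prime p"
    "\<forall>x\<in>carrier Q. x [^]\<^bsub>Q\<^esub> (\<Prod>p\<in>S. p) = \<one>\<^bsub>Q\<^esub>"
proof -
  obtain I :: "nat set" and E :: "nat \<Rightarrow> 'x monoid" where fin: "finite I"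
    and el: "\<forall>i\<in>I. elementary_abelian (E i)" and "Q \<cong> product_group I E"
    using assms(2) unfolding dprod_elem_abelian_def by blast
  then obtain \<phi> where \<phi>: "\<phi> \<in> iso Q (product_group I E)"
    unfolding is_iso_def by blast
  have "\<forall>i\<in>I. \<exists>p::nat. Factorial_Ring.prime p \<and> (\<forall>x\<in>carrier (E i). x [^]\<^bsub>E i\<^esub> p = \<one>\<^bsub>E i\<^esub>)"
    using el unfolding elementary_abelian_def by blast
  then obtain p :: "nat \<Rightarrow> nat"
    where "\<forall>i\<in>I. Factorial_Ring.prime (p i) \<and> (\<forall>x\<in>carrier (E i). x [^]\<^bsub>E i\<^esub> p i = \<one>\<^bsub>E i\<^esub>)"
    by (rule bchoice[elim_format]) blast
  then have p: "\<And>i. i \<in> I \<Longrightarrow> Factorial_Ring.prime (p i)"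
    "\<And>i x. i \<in> I \<Longrightarrow> x \<in> carrier (E i) \<Longrightarrow> x [^]\<^bsub>E i\<^esub> p i = \<one>\<^bsub>E i\<^esub>"
    by blast+
  have group_E: "group (E i)" if "i \<in> I" for i
    using el that unfolding elementary_abelian_def by (auto intro: comm_group.axioms(2))
  have "\<phi> \<in> hom Q (product_group I E)"
    using \<phi> unfolding iso_def by simp
  then interpret \<phi>: group_hom Q "product_group I E" \<phi>
    by (intro group_hom.intro[OF Q product_group[OF group_E]] group_hom_axioms.intro)
  have dvd: "p i dvd (\<Prod>q\<in>p ` I. q)" if "i \<in> I" for i
    using fin that by (intro dvd_prodI) auto
  have "x [^]\<^bsub>Q\<^esub> (\<Prod>q\<in>p ` I. q) = \<one>\<^bsub>Q\<^esub>" if x: "x \<in> carrier Q" for x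
  proof (rule \<phi>.nat_pow_eq_one_if_inj[OF _ x])
    show "inj_on \<phi> (carrier Q)"
      using \<phi> unfolding iso_def bij_betw_def by simp
    show "\<phi> x [^]\<^bsub>product_group I E\<^esub> (\<Prod>q\<in>p ` I. q) = \<one>\<^bsub>product_group I E\<^esub>"
      by (rule product_group_exponent[of I E p])
        (use group.is_monoid[OF group_E] p(2) dvd \<phi>.hom_closed[OF x] in auto)
  qed
  then show ?thesis
    using that fin p(1) by blast
qed

section \<open>Groups of F-class one\<close>

lemma (in normal) nat_pow_mem_if_quotient_exponent:
  assumes "x \<in> carrier G" "\<forall>q\<in>carrier (G Mod H). q [^]\<^bsub>G Mod H\<^esub> (m::nat) = \<one>\<^bsub>G Mod H\<^esub>"
  shows "x [^] m \<in> H"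
proof -
  have "H #> x \<in> carrier (G Mod H)"
    using assms(1) unfolding FactGroup_def RCOSETS_def by auto
  then have "H #> (x [^] m) = H"
    using assms FactGroup_pow[OF assms(1), of m] by simp
  then show ?thesis
    using coset_join1 nat_pow_closed[OF assms(1)] subgroup_axioms by blast
qed

lemma (in group) squarefree_exponent_of_quotients:
  assumes fin: "finite \<N>" and trivial: "\<Inter>\<N> = {\<one>}"
    and quotients: "\<And>N. N \<in> \<N> \<Longrightarrow> N \<lhd> G \<and> dprod_elem_abelian (G Mod N)"
  obtains S :: "nat set" where "finite S" "\<forall>p\<in>S. Factorial_Ring.prime p"
    "\<forall>x\<in>carrier G. x [^] (\<Prod>p\<in>S. p) = \<one>"
proof -
  have "\<exists>S::nat set. finite S \<and> (\<forall>p\<in>S. Factorial_Ring.prime p) \<and>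
      (\<forall>q\<in>carrier (G Mod N). q [^]\<^bsub>G Mod N\<^esub> (\<Prod>p\<in>S. p) = \<one>\<^bsub>G Mod N\<^esub>)" if "N \<in> \<N>" for N
    using quotients[OF that] normal.factorgroup_is_group dprod_elem_abelian_imp_squarefree_exponent
    by metis
  then obtain S :: "'a set \<Rightarrow> nat set" where S: "\<And>N. N \<in> \<N> \<Longrightarrow> finite (S N)"
    "\<And>N. N \<in> \<N> \<Longrightarrow> \<forall>p\<in>S N. Factorial_Ring.prime p"
    "\<And>N. N \<in> \<N> \<Longrightarrow> \<forall>q\<in>carrier (G Mod N). q [^]\<^bsub>G Mod N\<^esub> (\<Prod>p\<in>S N. p) = \<one>\<^bsub>G Mod N\<^esub>"
    by metis
  let ?S = "\<Union>N\<in>\<N>. S N"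
  have fin_S: "finite ?S"
    using fin S(1) by blast
  have "x [^] (\<Prod>p\<in>?S. p) \<in> N" if x: "x \<in> carrier G" and N: "N \<in> \<N>" for x N
  proof -
    interpret N: normal N G
      using quotients[OF N] by blast
    have "(\<Prod>p\<in>S N. p) dvd (\<Prod>p\<in>?S. p)"
      using N fin_S by (intro prod_dvd_prod_subset) auto
    then have "\<forall>q\<in>carrier (G Mod N). q [^]\<^bsub>G Mod N\<^esub> (\<Prod>p\<in>?S. p) = \<one>\<^bsub>G Mod N\<^esub>"
      using S(3)[OF N] N.factorgroup_is_group group.is_monoid monoid.nat_pow_eq_one_dvd by metis
    then show ?thesis
      by (rule N.nat_pow_mem_if_quotient_exponent[OF x])
  qed
  then have "\<forall>x\<in>carrier G. x [^] (\<Prod>p\<in>?S. p) = \<one>"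
    using trivial by blast
  then show ?thesis
    using that fin_S S(2) by blast
qed

lemma (in comm_group) abelian_solvable: "solvable G"
proof -
  have "(derived G ^^ 1) (carrier G) = {\<one>}"
    using derived_eq_singleton by simp
  then show ?thesis
    using solvable_iff_trivial_derived_seq by blast
qed

context group begin

lemma F_central_1:
  "F_central G 1 = \<Inter>{N. N \<subseteq> Fitting G \<and> N \<lhd> G\<lparr>carrier := Fitting G\<rparr> \<and>
      (\<forall>f\<in>Fitting G. \<forall>x\<in>Fitting G. f \<otimes> x \<otimes> inv f \<otimes> inv x \<in> N) \<and>
      dprod_elem_abelian (G\<lparr>carrier := Fitting G\<rparr> Mod N)}"
  by (simp add: F_step_def)

lemma Fitting_commute:
  assumes "F_central G 1 = {\<one>}" "f \<in> Fitting G" "x \<in> Fitting G"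
  shows "f \<otimes> x = x \<otimes> f"
proof -
  have "f \<otimes> x \<otimes> inv f \<otimes> inv x \<in> F_central G 1"
    unfolding F_central_1 using assms(2,3) by blast
  moreover have "f \<in> carrier G" "x \<in> carrier G"
    using subgroup.mem_carrier[OF normal_imp_subgroup[OF Fitting_normal]] assms(2,3) by auto
  ultimately show ?thesis
    using assms(1) commutator_elem_eq_one_iff by auto
qed

lemma Fitting_comm_group:
  assumes "F_central G 1 = {\<one>}"
  shows "comm_group (G\<lparr>carrier := Fitting G\<rparr>)"
proof -
  interpret F: group "G\<lparr>carrier := Fitting G\<rparr>"
    by (rule subgroup.subgroup_is_group[OF normal_imp_subgroup[OF Fitting_normal] is_group])
  show ?thesis
    using Fitting_commute[OF assms] by (intro F.group_comm_groupI) simp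
qed

lemma Fitting_dprod_elem_abelian:
  assumes fin: "finite (carrier G)" and \<nu>\<^sub>1: "F_central G 1 = {\<one>}"
  shows "dprod_elem_abelian (G\<lparr>carrier := Fitting G\<rparr>)"
proof -
  let ?F = "G\<lparr>carrier := Fitting G\<rparr>"
  interpret F: comm_group ?F
    by (rule Fitting_comm_group[OF \<nu>\<^sub>1])
  define \<N> where "\<N> = {N. N \<subseteq> Fitting G \<and> N \<lhd> ?F \<and>
      (\<forall>f\<in>Fitting G. \<forall>x\<in>Fitting G. f \<otimes> x \<otimes> inv f \<otimes> inv x \<in> N) \<and> dprod_elem_abelian (?F Mod N)}"
  have "finite (Fitting G)"
    using fin normal_imp_subgroup[OF Fitting_normal] subgroup.subset finite_subset by metis
  then have "finite \<N>"
    using finite_subset[of \<N> "Pow (Fitting G)"] unfolding \<N>_def by blast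
  moreover have "\<Inter>\<N> = {\<one>\<^bsub>?F\<^esub>}"
    using \<nu>\<^sub>1 unfolding F_central_1 \<N>_def by simp
  ultimately obtain S :: "nat set" where "finite S" "\<forall>p\<in>S. Factorial_Ring.prime p"
    "\<forall>x\<in>carrier ?F. x [^]\<^bsub>?F\<^esub> (\<Prod>p\<in>S. p) = \<one>\<^bsub>?F\<^esub>"
    using F.squarefree_exponent_of_quotients[of \<N>] unfolding \<N>_def by blast
  then show ?thesis
    by (rule F.squarefree_exponent_imp_dprod_elem_abelian)
qed

lemma card_Fitting_eq_F_rank:
  assumes "finite (carrier G)" "F_central G 1 = {\<one>}"
  shows "card (Fitting G) = F_rank G"
proof -
  interpret F: group "G\<lparr>carrier := Fitting G\<rparr>"
    by (rule subgroup.subgroup_is_group[OF normal_imp_subgroup[OF Fitting_normal] is_group])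
  have "finite (Fitting G)"
    using assms(1) normal_imp_subgroup[OF Fitting_normal] subgroup.subset finite_subset by metis
  then show ?thesis
    using F.card_rcosets_triv assms(2)
    by (simp add: F_rank_def order_def FactGroup_def)
qed

lemma F_central_subgroup:
  assumes H: "subgroup H G" and Fit: "Fitting (G\<lparr>carrier := H\<rparr>) = Fitting G" and "n \<le> 1"
  shows "F_central (G\<lparr>carrier := H\<rparr>) n = F_central G n"
proof -
  interpret GH: group "G\<lparr>carrier := H\<rparr>"
    by (rule subgroup.subgroup_is_group[OF H is_group])
  have "Fitting G \<subseteq> H"
    using subgroup.subset[OF normal_imp_subgroup[OF GH.Fitting_normal]] Fit by simp
  have inv: "inv\<^bsub>G\<lparr>carrier := H\<rparr>\<^esub> x = inv x" if "x \<in> Fitting G" for x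
    using m_inv_consistent[OF H] that \<open>Fitting G \<subseteq> H\<close> by blast
  have "F_step (G\<lparr>carrier := H\<rparr>) (Fitting G) = F_step G (Fitting G)"
    unfolding F_step_def Fit by (simp add: inv)
  then show ?thesis
    using assms(3) Fit by (cases n) simp_all
qed

end

theorem lemma3p1:
  fixes G :: "('a, 'b) monoid_scheme" and H :: "'a set" and l :: nat
  assumes "group G" and "finite (carrier G)"
    and "has_F_class G 1" and "F_rank G = l"
    and "H \<lhd> G" and "solvable (G\<lparr>carrier := H\<rparr>)"
    and "\<And>N. N \<lhd> G \<Longrightarrow> solvable (G\<lparr>carrier := N\<rparr>) \<Longrightarrow> N \<subseteq> H"
  shows "(dprod_elem_abelian (G\<lparr>carrier := Fitting G\<rparr>) \<and> card (Fitting G) = l)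
         \<and> (solvable (G\<lparr>carrier := H\<rparr>) \<and> has_F_class (G\<lparr>carrier := H\<rparr>) 1
         \<and> F_rank (G\<lparr>carrier := H\<rparr>) = l \<and> Fitting G = Fitting (G\<lparr>carrier := H\<rparr>))
         \<and> {h \<in> H. \<forall>f \<in> Fitting (G\<lparr>carrier := H\<rparr>). h \<otimes>\<^bsub>G\<^esub> f = f \<otimes>\<^bsub>G\<^esub> h}
         = Fitting (G\<lparr>carrier := H\<rparr>)"
proof -
  interpret group G by fact
  have \<nu>\<^sub>1: "F_central G 1 = {\<one>\<^bsub>G\<^esub>}"
    using assms(3) by (simp add: has_F_class_def)
  have "Fitting G \<subseteq> H"
    using assms(7)[OF Fitting_normal] comm_group.abelian_solvable[OF Fitting_comm_group[OF \<nu>\<^sub>1]] .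
  then have Fit_H: "Fitting (G\<lparr>carrier := H\<rparr>) = Fitting G"
    using Fitting_normal_subgroup[OF assms(2,5)] by blast
  have F_central_H: "F_central (G\<lparr>carrier := H\<rparr>) n = F_central G n" if "n \<le> 1" for n
    using F_central_subgroup[OF normal_imp_subgroup[OF assms(5)] Fit_H that] .
  have "{h \<in> H. \<forall>f\<in>Fitting G. h \<otimes>\<^bsub>G\<^esub> f = f \<otimes>\<^bsub>G\<^esub> h} = Fitting G"
    using solvable_centraliser_Fitting[OF assms(5,6)] \<open>Fitting G \<subseteq> H\<close> Fitting_commute[OF \<nu>\<^sub>1]
    by blast
  then show ?thesis
    using Fitting_dprod_elem_abelian[OF assms(2) \<nu>\<^sub>1] card_Fitting_eq_F_rank[OF assms(2) \<nu>\<^sub>1]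
      assms(3,4,6) F_central_H[OF le0] F_central_H[OF order_refl] Fit_H
    by (simp add: has_F_class_def F_rank_def)
qed

end
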